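(* $\mathrm{1RFA}/n\neq\mathrm{1RFA}/Rn$.
   Context: A 1rfa is a one-way deterministic finite automaton satisfying the reversibility condition (for every state $q$ and tape symbol $\sigma$ at most one $q'$ with $\delta(q',\sigma)=q$). For equal-length strings $x,y$, $\genfrac{[}{]}{0pt}{}{x}{y}$ is the two-track string with $x$ on the upper track and $y$ on the lower track. $\mathrm{1RFA}/n$ is the family of languages $L$ for which there exist a 1rfa $M$ and a (deterministic) advice function $h:\mathbb{N}\to\Gamma^*$ with $|h(n)|=n$ such that $M(\genfrac{[}{]}{0pt}{}{x}{h(|x|)})=L(x)$ for all $x$. $\mathrm{1RFA}/Rn$ is defined analogously with randomized advice: a probability ensemble $\{D_n\}$, $D_n$ a distribution on $\Gamma^n$, such that $M$ on $\genfrac{[}{]}{0pt}{}{x}{y}$ with $y\sim D_n$ outputs $L(x)$ with probability at least $1-\varepsilon$ for a constant $\varepsilon\in[0,1/2)$. *)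

theory Defs
  imports "HOL-Probability.Probability"
begin

text \<open>Tape symbols of a 1rfa reading a two-track input: left endmarker, right
endmarker, and two-track symbols (upper track symbol, lower/advice track symbol).\<close>

datatype tsym = Cent | Dollar | Trk "nat \<times> nat"

definition tape_syms :: "nat set \<Rightarrow> nat set \<Rightarrow> tsym set" where
  "tape_syms Sg Gm = {Cent, Dollar} \<union> Trk ` (Sg \<times> Gm)"

definition is_1rfa ::
  "nat set \<Rightarrow> nat set \<Rightarrow> nat set \<Rightarrow> (nat \<Rightarrow> tsym \<Rightarrow> nat) \<Rightarrow> nat \<Rightarrow> nat set \<Rightarrow> bool" where
  "is_1rfa Sg Gm Q delta q0 F \<longleftrightarrow>
     finite Q \<and> q0 \<in> Q \<and> F \<subseteq> Q \<and>
     (\<forall>q\<in>Q. \<forall>s\<in>tape_syms Sg Gm. delta q s \<in> Q) \<and>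
     (\<forall>q\<in>Q. \<forall>s\<in>tape_syms Sg Gm. \<forall>q1\<in>Q. \<forall>q2\<in>Q.
        delta q1 s = q \<and> delta q2 s = q \<longrightarrow> q1 = q2)"

definition rfa_accepts ::
  "(nat \<Rightarrow> tsym \<Rightarrow> nat) \<Rightarrow> nat \<Rightarrow> nat set \<Rightarrow> nat list \<Rightarrow> nat list \<Rightarrow> bool" where
  "rfa_accepts delta q0 F x y \<longleftrightarrow>
     fold (\<lambda>s q. delta q s) ([Cent] @ map Trk (zip x y) @ [Dollar]) q0 \<in> F"

text \<open>Languages are pairs (alphabet, language over that alphabet).\<close>

definition RFA_adv :: "(nat set \<times> nat list set) set" where
  "RFA_adv = {(Sg, L). finite Sg \<and> Sg \<noteq> {} \<and> L \<subseteq> lists Sg \<and>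
     (\<exists>Gm Q delta q0 F h. finite Gm \<and> is_1rfa Sg Gm Q delta q0 F \<and>
        (\<forall>n. length (h n) = n \<and> set (h n) \<subseteq> Gm) \<and>
        (\<forall>x\<in>lists Sg. rfa_accepts delta q0 F x (h (length x)) \<longleftrightarrow> x \<in> L))}"

definition RFA_radv :: "(nat set \<times> nat list set) set" where
  "RFA_radv = {(Sg, L). finite Sg \<and> Sg \<noteq> {} \<and> L \<subseteq> lists Sg \<and>
     (\<exists>Gm Q delta q0 F (D :: nat \<Rightarrow> nat list pmf) (eps :: real).
        finite Gm \<and> is_1rfa Sg Gm Q delta q0 F \<and>
        0 \<le> eps \<and> eps < 1/2 \<and>
        (\<forall>n. \<forall>y\<in>set_pmf (D n). length y = n \<and> set y \<subseteq> Gm) \<and>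
        (\<forall>x\<in>lists Sg.
           measure_pmf.prob (D (length x))
             {y. rfa_accepts delta q0 F x y \<longleftrightarrow> x \<in> L} \<ge> 1 - eps))}"

end

theory Submission
  imports Defs
begin

text \<open>The witness is the language of binary words containing a 1.
  With random advice y uniform over \<open>{0,1,2}\<^sup>n\<close>, a three-state reversible machine computes
  the inner product of x and y modulo 3 and accepts iff it is nonzero: this never accepts a word
  without 1 and, since the inner product is then uniform, accepts a word containing 1 with
  probability 2/3.
  With deterministic advice y of length n, let \<open>A\<^sub>k\<close> be the set of states reached after reading
  a length-k prefix containing a 1. The state after \<open>0\<^sup>k\<close> lies outside \<open>A\<^sub>k\<close> (both would then be
  completed by \<open>0\<^sup>n\<^sup>-\<^sup>k\<close> alike), and reading the symbol \<open>(1, y\<^sub>k)\<close> maps \<open>A\<^sub>k \<union> {state after 0\<^sup>k}\<close>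
  injectively into \<open>A\<^sub>k\<^sub>+\<^sub>1\<close> by reversibility. Hence \<open>|A\<^sub>n| \<ge> n\<close>, impossible for n > |Q|.\<close>

definition contains_one :: "nat list set" where
  "contains_one = {x \<in> lists {0,1}. 1 \<in> set x}"

lemma is_1rfa_finite_states: "is_1rfa Sg Gm Q delta q0 F \<Longrightarrow> finite Q"
  unfolding is_1rfa_def by blast

lemma is_1rfa_initial_state: "is_1rfa Sg Gm Q delta q0 F \<Longrightarrow> q0 \<in> Q"
  unfolding is_1rfa_def by blast

lemma is_1rfa_delta_in_states:
  "is_1rfa Sg Gm Q delta q0 F \<Longrightarrow> q \<in> Q \<Longrightarrow> s \<in> tape_syms Sg Gm \<Longrightarrow> delta q s \<in> Q"
  unfolding is_1rfa_def by blast

lemma is_1rfa_inj_on_delta: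
  assumes "is_1rfa Sg Gm Q delta q0 F" and "s \<in> tape_syms Sg Gm"
  shows "inj_on (\<lambda>q. delta q s) Q"
proof (rule inj_onI)
  fix q1 q2 assume "q1 \<in> Q" "q2 \<in> Q" "delta q1 s = delta q2 s"
  moreover have "delta q1 s \<in> Q" using is_1rfa_delta_in_states[OF assms(1) \<open>q1 \<in> Q\<close> assms(2)] .
  ultimately show "q1 = q2" using assms unfolding is_1rfa_def by blast
qed

lemma is_1rfa_fold_in_states:
  assumes "is_1rfa Sg Gm Q delta q0 F"
  shows "q \<in> Q \<Longrightarrow> set ws \<subseteq> tape_syms Sg Gm \<Longrightarrow> fold (\<lambda>s q. delta q s) ws q \<in> Q"
  by (induction ws arbitrary: q) (auto intro: is_1rfa_delta_in_states[OF assms])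

lemma RFA_advE:
  assumes "(Sg, L) \<in> RFA_adv"
  obtains Gm Q delta q0 F h where "is_1rfa Sg Gm Q delta q0 F"
    and "\<And>n. length (h n) = n" and "\<And>n. set (h n) \<subseteq> Gm"
    and "\<And>x. x \<in> lists Sg \<Longrightarrow> rfa_accepts delta q0 F x (h (length x)) \<longleftrightarrow> x \<in> L"
  using assms unfolding RFA_adv_def by (simp only: mem_Collect_eq case_prod_conv) metis

lemma RFA_radvI:
  assumes "finite Sg" "Sg \<noteq> {}" "L \<subseteq> lists Sg" "finite Gm" "is_1rfa Sg Gm Q delta q0 F"
    and "0 \<le> eps" "eps < 1/2"
    and "\<And>n y. y \<in> set_pmf (D n) \<Longrightarrow> length y = n \<and> set y \<subseteq> Gm"
    and "\<And>x. x \<in> lists Sg \<Longrightarrow>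
      measure_pmf.prob (D (length x)) {y. rfa_accepts delta q0 F x y \<longleftrightarrow> x \<in> L} \<ge> 1 - eps"
  shows "(Sg, L) \<in> RFA_radv"
  unfolding RFA_radv_def mem_Collect_eq case_prod_conv
  using assms by (intro conjI exI[of _ Gm] exI[of _ Q] exI[of _ delta] exI[of _ q0] exI[of _ F]
    exI[of _ D] exI[of _ eps]) auto

definition prefix_state :: "(nat \<Rightarrow> tsym \<Rightarrow> nat) \<Rightarrow> nat \<Rightarrow> nat list \<Rightarrow> nat list \<Rightarrow> nat" where
  "prefix_state delta q0 y u = fold (\<lambda>s q. delta q s) (Cent # map Trk (zip u y)) q0"

lemma rfa_accepts_iff_prefix_state:
  "rfa_accepts delta q0 F x y \<longleftrightarrow> delta (prefix_state delta q0 y x) Dollar \<in> F"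
  by (simp add: rfa_accepts_def prefix_state_def)

lemma prefix_state_append:
  assumes "length u \<le> length y"
  shows "prefix_state delta q0 y (u @ v) =
    fold (\<lambda>s q. delta q s) (map Trk (zip v (drop (length u) y))) (prefix_state delta q0 y u)"
proof -
  have "zip u (take (length u) y) = zip u y"
    by (metis take_all order_refl length_zip min.cobounded1 take_zip)
  then show ?thesis
    using assms by (simp add: prefix_state_def zip_append1)
qed

lemma prefix_state_snoc:
  assumes "length u < length y"
  shows "prefix_state delta q0 y (u @ [a]) = delta (prefix_state delta q0 y u) (Trk (a, y ! length u))"
  using prefix_state_append[of u y delta q0 "[a]"] assms
  by (simp add: Cons_nth_drop_Suc[symmetric])

lemma prefix_state_in_states:
  assumes "is_1rfa Sg Gm Q delta q0 F" and "set y \<subseteq> Gm" and "u \<in> lists Sg"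
  shows "prefix_state delta q0 y u \<in> Q"
proof -
  have "set (Cent # map Trk (zip u y)) \<subseteq> tape_syms Sg Gm"
    using assms(2,3) by (auto simp: tape_syms_def dest: set_zip_leftD set_zip_rightD)
  then show ?thesis
    unfolding prefix_state_def
    by (rule is_1rfa_fold_in_states[OF assms(1) is_1rfa_initial_state[OF assms(1)]])
qed

lemma prefix_state_eq_imp_accepts_eq:
  assumes "prefix_state delta q0 y u = prefix_state delta q0 y u'" "length u = length u'"
    and "length u \<le> length y"
  shows "rfa_accepts delta q0 F (u @ v) y \<longleftrightarrow> rfa_accepts delta q0 F (u' @ v) y"
  using assms by (simp add: rfa_accepts_iff_prefix_state prefix_state_append)

subsection \<open>Deterministic advice cannot recognise \<^const>\<open>contains_one\<close>\<close>

context
  fixes Gm Q delta q0 F y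
  assumes rfa: "is_1rfa {0,1} Gm Q delta q0 F"
    and advice: "set y \<subseteq> Gm"
    and correct: "\<And>x. x \<in> lists {0,1} \<Longrightarrow> length x = length y \<Longrightarrow>
      rfa_accepts delta q0 F x y \<longleftrightarrow> x \<in> contains_one"
begin

definition one_states :: "nat \<Rightarrow> nat set" where
  "one_states k = prefix_state delta q0 y ` {u \<in> lists {0,1}. length u = k \<and> 1 \<in> set u}"

lemma one_states_subset: "one_states k \<subseteq> Q"
  unfolding one_states_def by (intro image_subsetI prefix_state_in_states[OF rfa advice]) simp

lemma zeros_state_notin_one_states:
  assumes "k \<le> length y"
  shows "prefix_state delta q0 y (replicate k 0) \<notin> one_states k"
proof
  let ?pad = "replicate (length y - k) (0::nat)"
  assume "prefix_state delta q0 y (replicate k 0) \<in> one_states k"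
  then obtain u where "u \<in> {u \<in> lists {0,1}. length u = k \<and> 1 \<in> set u}"
    and same: "prefix_state delta q0 y (replicate k 0) = prefix_state delta q0 y u"
    unfolding one_states_def by (rule imageE)
  then have u: "u \<in> lists {0,1}" "length u = k" "1 \<in> set u"
    by simp_all
  have zeros: "replicate n 0 \<in> lists {0,1::nat}" for n
    by (simp add: replicate_in_lists)
  then have "u @ ?pad \<in> lists {0,1}" "length (u @ ?pad) = length y" "u @ ?pad \<in> contains_one"
    using u assms by (simp_all add: contains_one_def)
  then have "rfa_accepts delta q0 F (u @ ?pad) y"
    using correct by blast
  then have "rfa_accepts delta q0 F (replicate k 0 @ ?pad) y"
    using prefix_state_eq_imp_accepts_eq[OF same] u assms by simp
  moreover have "replicate k 0 @ ?pad = replicate (length y) 0"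
    using assms by (simp flip: replicate_add)
  moreover have "replicate (length y) 0 \<notin> contains_one"
    by (simp add: contains_one_def)
  ultimately show False
    using correct[OF zeros] by simp
qed

lemma read_one_prefix_state_in_one_states:
  assumes "u \<in> lists {0,1}" "length u < length y"
  shows "delta (prefix_state delta q0 y u) (Trk (1, y ! length u)) \<in> one_states (Suc (length u))"
proof -
  have "delta (prefix_state delta q0 y u) (Trk (1, y ! length u)) = prefix_state delta q0 y (u @ [1])"
    using prefix_state_snoc[OF assms(2)] by simp
  moreover have "u @ [1] \<in> {w \<in> lists {0,1}. length w = Suc (length u) \<and> 1 \<in> set w}"
    using assms(1) by simp
  ultimately show ?thesis
    unfolding one_states_def by (rule image_eqI)
qed

lemma card_one_states_ge:
  "k \<le> length y \<Longrightarrow> k \<le> card (one_states k)"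
proof (induction k)
  case 0
  then show ?case by simp
next
  case (Suc k)
  let ?read_one = "\<lambda>q. delta q (Trk (1, y ! k))"
  let ?B = "insert (prefix_state delta q0 y (replicate k 0)) (one_states k)"
  have zeros: "replicate k 0 \<in> lists {0,1::nat}"
    by (simp add: replicate_in_lists)
  have finite_one_states: "finite (one_states n)" for n
    using finite_subset[OF one_states_subset is_1rfa_finite_states[OF rfa]] .
  have "y ! k \<in> Gm"
    using Suc.prems by (intro subsetD[OF advice] nth_mem) simp
  then have "Trk (1, y ! k) \<in> tape_syms {0,1} Gm"
    by (simp add: tape_syms_def)
  moreover have "?B \<subseteq> Q"
    using one_states_subset prefix_state_in_states[OF rfa advice zeros] by simp
  ultimately have inj: "inj_on ?read_one ?B"
    by (rule inj_on_subset[OF is_1rfa_inj_on_delta[OF rfa]])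
  have "?read_one ` ?B \<subseteq> one_states (Suc k)"
  proof (rule image_subsetI)
    fix q assume "q \<in> ?B"
    then show "?read_one q \<in> one_states (Suc k)"
    proof (rule insertE)
      assume "q = prefix_state delta q0 y (replicate k 0)"
      then show ?thesis
        using read_one_prefix_state_in_one_states[OF zeros] Suc.prems by simp
    next
      assume "q \<in> one_states k"
      then obtain u where "u \<in> {u \<in> lists {0,1}. length u = k \<and> 1 \<in> set u}"
        and "q = prefix_state delta q0 y u"
        unfolding one_states_def by (rule imageE)
      then show ?thesis
        using read_one_prefix_state_in_one_states[of u] Suc.prems by simp
    qed
  qed
  then have "card ?B \<le> card (one_states (Suc k))"
    by (rule card_inj_on_le[OF inj _ finite_one_states])
  moreover have "card ?B = Suc (card (one_states k))"
    using zeros_state_notin_one_states[of k] Suc.prems finite_one_states by simp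
  ultimately show ?case using Suc by simp
qed

lemma advice_length_le_card_states: "length y \<le> card Q"
proof -
  have "length y \<le> card (one_states (length y))"
    by (rule card_one_states_ge) simp
  also have "\<dots> \<le> card Q"
    by (rule card_mono[OF is_1rfa_finite_states[OF rfa] one_states_subset])
  finally show ?thesis .
qed

end

lemma contains_one_notin_RFA_adv: "({0,1}, contains_one) \<notin> RFA_adv"
proof
  assume "({0,1}, contains_one) \<in> RFA_adv"
  then obtain Gm Q delta q0 F h where rfa: "is_1rfa {0,1} Gm Q delta q0 F"
    and len: "\<And>n. length (h n) = n" and advice: "\<And>n. set (h n) \<subseteq> Gm"
    and acc: "\<And>x. x \<in> lists {0,1} \<Longrightarrow> rfa_accepts delta q0 F x (h (length x)) \<longleftrightarrow> x \<in> contains_one"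
    by (erule RFA_advE)
  have "length (h (Suc (card Q))) \<le> card Q"
    using advice_length_le_card_states[OF rfa advice] acc len by metis
  then show False using len by (metis Suc_n_not_le_n)
qed

subsection \<open>Randomized advice recognises \<^const>\<open>contains_one\<close>\<close>

definition uniform3 :: "nat pmf" where
  "uniform3 = pmf_of_set {0,1,2}"

fun uniform_words :: "nat \<Rightarrow> nat list pmf" where
  "uniform_words 0 = return_pmf []"
| "uniform_words (Suc n) = bind_pmf uniform3 (\<lambda>b. map_pmf (\<lambda>ys. b # ys) (uniform_words n))"

fun dot :: "nat list \<Rightarrow> nat list \<Rightarrow> nat" where
  "dot (a # xs) (b # ys) = a * b + dot xs ys"
| "dot _ _ = 0"

definition dot_mod3_delta :: "nat \<Rightarrow> tsym \<Rightarrow> nat" where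
  "dot_mod3_delta q s = (case s of Trk (a, b) \<Rightarrow> (q + a * b) mod 3 | _ \<Rightarrow> q)"

lemma set_pmf_uniform_words: "y \<in> set_pmf (uniform_words n) \<Longrightarrow> length y = n \<and> set y \<subseteq> {0,1,2}"
  by (induction n arbitrary: y) (force simp: uniform3_def)+

lemma dot_eq_0: "set x \<subseteq> {0} \<Longrightarrow> dot x y = 0"
  by (induction x y rule: dot.induct) auto

lemma fold_dot_mod3_delta:
  "q < 3 \<Longrightarrow> fold (\<lambda>s q. dot_mod3_delta q s) (map Trk (zip x y)) q = (q + dot x y) mod 3"
proof (induction x y arbitrary: q rule: dot.induct)
  case (1 a xs b ys)
  then show ?case by (simp add: dot_mod3_delta_def mod_add_left_eq add.assoc)
qed simp_all

lemma rfa_accepts_dot_mod3: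
  "rfa_accepts dot_mod3_delta 0 {1,2} x y \<longleftrightarrow> dot x y mod 3 \<in> {1,2}"
proof -
  have "dot_mod3_delta 0 Cent = 0" "\<And>q. dot_mod3_delta q Dollar = q"
    by (simp_all add: dot_mod3_delta_def)
  then show ?thesis
    by (simp add: rfa_accepts_def fold_dot_mod3_delta)
qed

lemma dot_mod3_delta_inj:
  assumes "q1 < 3" "q2 < 3" "dot_mod3_delta q1 s = dot_mod3_delta q2 s"
  shows "q1 = q2"
proof (cases s)
  case (Trk p)
  then have "(q1 + fst p * snd p) mod 3 = (q2 + fst p * snd p) mod 3"
    using assms(3) by (simp add: dot_mod3_delta_def split: prod.splits)
  with assms(1,2) show ?thesis by presburger
qed (use assms in \<open>simp_all add: dot_mod3_delta_def\<close>)

lemma is_1rfa_dot_mod3: "is_1rfa Sg Gm {0,1,2} dot_mod3_delta 0 {1,2}"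
  unfolding is_1rfa_def
proof (intro conjI ballI impI)
  fix q s assume "q \<in> {0,1,2::nat}"
  then have "dot_mod3_delta q s < 3"
    by (auto simp: dot_mod3_delta_def split: tsym.splits prod.splits)
  then show "dot_mod3_delta q s \<in> {0,1,2}" by auto
next
  fix q s q1 q2 assume "q1 \<in> {0,1,2::nat}" "q2 \<in> {0,1,2::nat}"
    "dot_mod3_delta q1 s = q \<and> dot_mod3_delta q2 s = q"
  then show "q1 = q2" using dot_mod3_delta_inj[of q1 q2 s] by auto
qed auto

lemma map_pmf_uniform3_shift: "map_pmf (\<lambda>b. (b + r) mod 3) uniform3 = uniform3"
proof -
  have "r mod 3 \<in> {0,1,2}" by auto
  then have "(\<lambda>b. (b + r mod 3) mod 3) ` {0,1,2} = {0,1,2::nat}"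
    and "inj_on (\<lambda>b. (b + r mod 3) mod 3) {0,1,2::nat}"
    by (auto simp: inj_on_def)
  then show ?thesis
    unfolding uniform3_def by (simp add: map_pmf_of_set_inj mod_add_right_eq)
qed

text \<open>A coordinate with \<open>x\<^sub>i = 1\<close> carries an independent uniform summand \<open>y\<^sub>i\<close>, which
  makes the whole sum uniform.\<close>

lemma map_pmf_dot_uniform_words:
  "x \<in> lists {0,1} \<Longrightarrow> 1 \<in> set x \<Longrightarrow>
    map_pmf (\<lambda>y. dot x y mod 3) (uniform_words (length x)) = uniform3"
proof (induction x)
  case Nil
  then show ?case by simp
next
  case (Cons a x)
  have split: "map_pmf (\<lambda>y. dot (a # x) y mod 3) (uniform_words (length (a # x)))
     = bind_pmf uniform3 (\<lambda>b. map_pmf (\<lambda>ys. (a * b + dot x ys) mod 3) (uniform_words (length x)))"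
    by (simp add: map_bind_pmf map_pmf_comp)
  show ?case
  proof (cases "a = 1")
    case True
    have "bind_pmf uniform3 (\<lambda>b. map_pmf (\<lambda>ys. (a * b + dot x ys) mod 3) (uniform_words (length x)))
      = bind_pmf (uniform_words (length x)) (\<lambda>ys. map_pmf (\<lambda>b. (b + dot x ys) mod 3) uniform3)"
      unfolding map_pmf_def using True by (subst bind_commute_pmf) simp
    also have "\<dots> = uniform3" by (simp add: map_pmf_uniform3_shift)
    finally show ?thesis using split by simp
  next
    case False
    then show ?thesis using split Cons by simp
  qed
qed

lemma prob_dot_mod3_correct:
  assumes x: "x \<in> lists {0,1}"
  shows "measure_pmf.prob (uniform_words (length x))
    {y. rfa_accepts dot_mod3_delta 0 {1,2} x y \<longleftrightarrow> x \<in> contains_one} \<ge> 2/3"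
proof (cases "1 \<in> set x")
  case True
  then have "{y. rfa_accepts dot_mod3_delta 0 {1,2} x y \<longleftrightarrow> x \<in> contains_one}
      = (\<lambda>y. dot x y mod 3) -` {1,2}"
    using x by (simp only: rfa_accepts_dot_mod3) (auto simp: contains_one_def)
  then have "measure_pmf.prob (uniform_words (length x))
      {y. rfa_accepts dot_mod3_delta 0 {1,2} x y \<longleftrightarrow> x \<in> contains_one}
    = measure_pmf.prob (map_pmf (\<lambda>y. dot x y mod 3) (uniform_words (length x))) {1,2}"
    by simp
  also have "\<dots> = 2/3"
    using x True by (simp add: map_pmf_dot_uniform_words uniform3_def measure_pmf_of_set)
  finally show ?thesis by simp
next
  case False
  then have "set x \<subseteq> {0}" using x by auto
  then have "{y. rfa_accepts dot_mod3_delta 0 {1,2} x y \<longleftrightarrow> x \<in> contains_one} = UNIV"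
    using False by (simp only: rfa_accepts_dot_mod3) (auto simp: contains_one_def dot_eq_0)
  then show ?thesis by simp
qed

lemma contains_one_in_RFA_radv: "({0,1}, contains_one) \<in> RFA_radv"
proof (rule RFA_radvI)
  show "is_1rfa {0,1} {0,1,2} {0,1,2} dot_mod3_delta 0 {1,2}"
    by (rule is_1rfa_dot_mod3)
  show "\<And>n y. y \<in> set_pmf (uniform_words n) \<Longrightarrow> length y = n \<and> set y \<subseteq> {0,1,2}"
    by (rule set_pmf_uniform_words)
  show "measure_pmf.prob (uniform_words (length x))
      {y. rfa_accepts dot_mod3_delta 0 {1,2} x y \<longleftrightarrow> x \<in> contains_one} \<ge> 1 - 1/3"
    if "x \<in> lists {0,1}" for x
    using prob_dot_mod3_correct[OF that] by simp
qed (auto simp: contains_one_def)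

theorem corollary4p4:
  shows "RFA_adv \<noteq> RFA_radv"
  using contains_one_notin_RFA_adv contains_one_in_RFA_radv by blast

end
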